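(* Let $\lambda\ge L_\varphi^2$. Then $\sum_{k=1}^{K_T}\sum_{t=t_k}^{t_{k+1}-1}B^{2,t_k}_{s_t,a_t}\le\frac{12d}{\kappa}\beta_T^2\log\big(1+\frac{T\mathcal UL_\varphi^2}{\lambda d}\big)$.
   Context: Setting: MNL model with finite $\mathcal S,\mathcal A$, reachable sets $\mathcal S_{s,a}$, $\mathcal U=\max|\mathcal S_{s,a}|$, features $\varphi\in\mathbb R^d$, $p(s'\mid s,a,\theta)=\exp(\varphi(s,a,s')^\top\theta)/\sum_{s''\in\mathcal S_{s,a}}\exp(\varphi(s,a,s'')^\top\theta)$; assumptions (A1) $\|\varphi\|_2\le L_\varphi$, $\|\theta^*\|_2\le L_\theta$, $\Theta=\{\|\theta\|_2\le L_\theta\}$; (A2) $\inf_{\theta\in\Theta}p(s'\mid s_t,a_t,\theta)p(s''\mid s_t,a_t,\theta)\ge\kappa\in(0,1)$ for all $t$, $s',s''\in\mathcal S_{s_t,a_t}$; (A3) each $\mathcal S_{s,a}$ has $s'$ with $\varphi(s,a,s')=0$. Trajectory and episodes from \texttt{UCMNLK}: online estimator with $\Sigma_1=\lambda I_d$, $\Sigma_{t+1}=\Sigma_t+\nabla^2\ell_t(\widehat\theta_{t+1})$ ($\ell_t$ the multinomial log-loss of step $t$, $\widehat\theta_{t+1}\in\Theta$); episodes $k=1..K_T$ start at $t_k$ ($t_{K_T+1}=T+1$), a new one starting when $\det\Sigma_t>2\det\Sigma_{t_k}$. $\beta_t>0$ is nondecreasing in $t$, and $B^{2,t}_{s,a}=3\beta_t^2\max_{s'\in\mathcal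 S_{s,a}}\|\varphi(s,a,s')\|^2_{\Sigma_t^{-1}}$. *)

theory Defs
  imports "HOL-Analysis.Analysis"
begin

definition outer :: "real^'d \<Rightarrow> real^'d \<Rightarrow> real^'d^'d" where
  "outer x y = (\<chi> i j. x $ i * y $ j)"

text \<open>MNL transition probability p(s' | s,a,theta); here phi = varphi(s,a,.) and S = S_{s,a}.\<close>
definition mnl_prob :: "('s \<Rightarrow> real^'d) \<Rightarrow> 's set \<Rightarrow> real^'d \<Rightarrow> 's \<Rightarrow> real" where
  "mnl_prob phi S \<theta> s' = exp (phi s' \<bullet> \<theta>) / (\<Sum>s''\<in>S. exp (phi s'' \<bullet> \<theta>))"

text \<open>Hessian (w.r.t. theta) of the multinomial log-loss of one step, in closed form:
  sum_s' p(s') phi(s') phi(s')^T - (sum_s' p(s') phi(s')) (sum_s' p(s') phi(s'))^T.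
  It does not depend on the observed next state.\<close>
definition mnl_hess :: "('s \<Rightarrow> real^'d) \<Rightarrow> 's set \<Rightarrow> real^'d \<Rightarrow> real^'d^'d" where
  "mnl_hess phi S \<theta> =
     (let m = (\<Sum>s'\<in>S. mnl_prob phi S \<theta> s' *\<^sub>R phi s')
      in (\<Sum>s'\<in>S. mnl_prob phi S \<theta> s' *\<^sub>R outer (phi s') (phi s')) - outer m m)"

definition wnorm_sq_inv :: "real^'d^'d \<Rightarrow> real^'d \<Rightarrow> real" where
  "wnorm_sq_inv M x = x \<bullet> (matrix_inv M *v x)"

definition mnl_U :: "('s::finite \<Rightarrow> 'a::finite \<Rightarrow> 's set) \<Rightarrow> nat" where
  "mnl_U Ssa = Max ((\<lambda>p. card (Ssa (fst p) (snd p))) ` UNIV)"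

definition Bsq :: "(nat \<Rightarrow> real) \<Rightarrow> (nat \<Rightarrow> real^'d^'d) \<Rightarrow> ('s \<Rightarrow> 'a \<Rightarrow> 's \<Rightarrow> real^'d)
                   \<Rightarrow> ('s \<Rightarrow> 'a \<Rightarrow> 's set) \<Rightarrow> nat \<Rightarrow> 's \<Rightarrow> 'a \<Rightarrow> real" where
  "Bsq \<beta> \<Sigma> \<phi> Ssa t s a =
     3 * (\<beta> t)\<^sup>2 * Max ((\<lambda>s'. wnorm_sq_inv (\<Sigma> t) (\<phi> s a s')) ` Ssa s a)"

end

theory Submission
  imports Defs
begin

text \<open>Each \<open>\<Sigma>_t\<close> arises from \<open>\<lambda> I\<close> by adding MNL Hessians, and every MNL Hessian is a nonnegative
  combination of rank-one matrices \<open>v v^T\<close> (differences of two features). Along rank-one updates,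
  the matrix determinant lemma and Sherman--Morrison show that \<open>det\<close> grows and that the weighted
  norm \<open>x^T \<Sigma>^-1 x\<close> shrinks at most by the factor by which \<open>det\<close> grows. Since every reachable set
  contains a state of zero feature, the Hessian of step \<open>t\<close> dominates \<open>\<kappa> \<phi>_j \<phi>_j^T\<close>; as the
  weighted norms are at most 1, this gives
  \<open>\<kappa> \<phi>_j^T \<Sigma>_t^-1 \<phi>_j \<le> 2 (ln det \<Sigma>_(t+1) - ln det \<Sigma>_t)\<close>.
  Within an episode \<open>det\<close> at most doubles, so a bonus computed at the start of the episode is at
  most twice the current one. The sum thus telescopes to \<open>ln det \<Sigma>_(T+1) - ln det \<Sigma>_1\<close>, which
  Hadamard's inequality and AM--GM on the diagonal bound by \<open>d ln (1 + T L^2 / (\<lambda> d))\<close>.\<close>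

section \<open>Inverses and outer products\<close>

lemma matrix_mul_matrix_inv:
  fixes A :: "real^'n^'n"
  assumes "det A \<noteq> 0"
  shows "A ** matrix_inv A = mat 1" "matrix_inv A ** A = mat 1"
proof -
  have "\<exists>A'. A ** A' = mat 1 \<and> A' ** A = mat 1"
    using assms invertible_det_nz unfolding invertible_def by blast
  then have "A ** matrix_inv A = mat 1 \<and> matrix_inv A ** A = mat 1"
    unfolding matrix_inv_def by (rule someI_ex)
  then show "A ** matrix_inv A = mat 1" "matrix_inv A ** A = mat 1" by auto
qed

lemma matrix_vector_mul_matrix_inv:
  fixes A :: "real^'n^'n"
  assumes "det A \<noteq> 0"
  shows "A *v (matrix_inv A *v x) = x" "matrix_inv A *v (A *v x) = x"
  by (simp_all add: matrix_vector_mul_assoc matrix_mul_matrix_inv[OF assms])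

lemma matrix_inv_unique:
  fixes A B :: "real^'n^'n"
  assumes "det A \<noteq> 0" "B ** A = mat 1"
  shows "B = matrix_inv A"
  by (metis assms matrix_mul_assoc matrix_mul_lid matrix_mul_matrix_inv(1) matrix_mul_rid)

lemma transpose_matrix_inv_symmetric:
  fixes A :: "real^'n^'n"
  assumes "transpose A = A" "det A \<noteq> 0"
  shows "transpose (matrix_inv A) = matrix_inv A"
proof (rule matrix_inv_unique[OF assms(2)])
  show "transpose (matrix_inv A) ** A = mat 1"
    by (metis assms matrix_mul_matrix_inv(1) matrix_transpose_mul transpose_mat)
qed

lemma inner_matrix_vector_symmetric:
  fixes M :: "real^'n^'n"
  assumes "transpose M = M"
  shows "x \<bullet> (M *v y) = y \<bullet> (M *v x)"
  by (metis assms dot_lmul_matrix inner_commute transpose_matrix_vector)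

lemma inner_axis_matrix_axis: "axis i 1 \<bullet> ((M::real^'n^'n) *v axis j 1) = M$i$j"
  unfolding inner_axis'
  by (simp add: matrix_vector_mult_def axis_def if_distrib[of "\<lambda>x. M$i$_ * x"] cong: if_cong)

lemma transpose_add: "transpose ((A::'a::plus^'n^'m) + B) = transpose A + transpose B"
  by (simp add: vec_eq_iff transpose_def)

lemma matrix_add_rdistrib: "((A::real^'n^'m) + B) ** C = A ** C + B ** C"
  by (simp add: vec_eq_iff matrix_matrix_mult_def distrib_right sum.distrib)

lemma outer_mult_vec: "outer u v *v y = (v \<bullet> y) *\<^sub>R u"
  by (simp add: outer_def vec_eq_iff matrix_vector_mult_def inner_vec_def sum_distrib_left
      algebra_simps)

lemma matrix_mul_outer: "(A::real^'n^'n) ** outer u v = outer (A *v u) v"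
  by (simp add: outer_def vec_eq_iff matrix_matrix_mult_def matrix_vector_mult_def sum_distrib_left
      mult.left_commute mult.commute)

lemma outer_matrix_mul: "outer u v ** (M::real^'n^'n) = outer u (transpose M *v v)"
  by (simp add: outer_def vec_eq_iff matrix_matrix_mult_def matrix_vector_mult_def transpose_def
      sum_distrib_left mult.left_commute mult.commute)

lemma transpose_outer: "transpose (outer u v) = outer v u"
  by (simp add: outer_def vec_eq_iff transpose_def)

lemma inner_outer_mult_vec: "x \<bullet> (outer v v *v x) = (v \<bullet> x)\<^sup>2"
  by (simp add: outer_mult_vec power2_eq_square inner_commute)

lemma scaleR_outer: "c *\<^sub>R outer u v = outer (c *\<^sub>R u) v"
  by (simp add: outer_def vec_eq_iff)

lemma outer_minus_minus: "outer (- x) (- x) = outer x x"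
  by (simp add: outer_def vec_eq_iff)

lemma trace_outer: "trace (outer u v) = u \<bullet> v"
  by (simp add: trace_def outer_def inner_vec_def)

lemma trace_sum: "trace (\<Sum>i\<in>F. f i :: real^'n^'n) = (\<Sum>i\<in>F. trace (f i))"
  by (simp add: trace_def sum_component sum.swap[of _ UNIV F])

lemma trace_scaleR: "trace (c *\<^sub>R (M::real^'n^'n)) = c * trace M"
  by (simp add: trace_def sum_distrib_left)

lemma det_mat1_row_replace:
  fixes r :: "real^'n"
  shows "det (\<chi> i. if i = k then r else row i (mat 1 :: real^'n^'n)) = r $ k"
proof -
  have r: "(\<Sum>i\<in>UNIV. r $ i *s row i (mat 1 :: real^'n^'n)) = r"
    by (simp add: vec_eq_iff row_def mat_def sum_component if_distrib[of "\<lambda>x. r$_ * x"] cong: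
        if_cong)
  show ?thesis using cramer_lemma_transpose[of k r "mat 1 :: real^'n^'n"] unfolding r by simp
qed

lemma det_mat1_add_outer:
  fixes u w :: "real^'n"
  shows "det (mat 1 + outer u w) = 1 + u \<bullet> w"
proof (cases "u = 0")
  case True
  then have "outer u w = 0" by (simp add: outer_def vec_eq_iff)
  then show ?thesis using True by simp
next
  case False
  then obtain k where uk: "u $ k \<noteq> 0" by (auto simp: vec_eq_iff)
  define M where "M = mat 1 + outer u w"
  define c where "c = 1 + u \<bullet> w"
  \<comment> \<open>Cramer's rule for the eigenvector \<open>M u = c u\<close> gives \<open>u\<^sub>k det M = det (P ** Q)\<close>, where
      \<open>P\<close> is the identity with column \<open>k\<close> replaced
        by \<open>u\<close> and \<open>Q\<close> the identity with row \<open>k\<close> replaced.\<close>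
  define P :: "real^'n^'n" where "P = (\<chi> i j. if j = k then u$i else (mat 1 :: real^'n^'n)$i$j)"
  define Q :: "real^'n^'n" where
    "Q = (\<chi> i. if i = k then (\<chi> j. if j = k then c else w$j) else row i (mat 1 :: real^'n^'n))"
  have detP: "det P = u $ k"
    using matrix_vector_mul_lid[of u] cramer_lemma[where A="mat 1 :: real^'n^'n" and k=k and x=u]
    by (simp only: P_def) simp
  have detQ: "det Q = c"
    unfolding Q_def det_mat1_row_replace by simp
  have Qij: "Q$i$j = (if i = k then (if j = k then c else w$j) else if i = j then 1 else 0)" for i j
    by (simp add: Q_def row_def mat_def)
  have PQe: "(P ** Q)$i$j = u$i * Q$k$j + (if i = j \<and> i \<noteq> k then 1 else 0)" for i j
  proof -
    have "(P ** Q)$i$j = P$i$k * Q$k$j + (\<Sum>l\<in>UNIV-{k}. P$i$l * Q$l$j)"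
      by (simp add: matrix_matrix_mult_def sum.remove[of UNIV k])
    also have "(\<Sum>l\<in>UNIV-{k}. P$i$l * Q$l$j)
        = (\<Sum>l\<in>UNIV-{k}. if l = i then (if i = j then 1 else 0) else 0)"
      by (rule sum.cong) (auto simp: P_def Qij mat_def)
    finally show ?thesis by (simp add: P_def sum.delta)
  qed
  have Mu: "M *v u = c *\<^sub>R u"
    by (simp add: M_def c_def matrix_vector_mult_add_rdistrib outer_mult_vec inner_commute
        algebra_simps)
  have PQ: "P ** Q = (\<chi> i j. if j = k then (M *v u)$i else M$i$j)"
  proof -
    have Mij: "M$i$j = (if i = j then 1 else 0) + u$i * w$j" for i j
      by (simp add: M_def mat_def outer_def)
    show ?thesis by (auto simp: vec_eq_iff PQe Qij Mu Mij)
  qed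
  have "u $ k * det M = det (P ** Q)"
    using cramer_lemma[where A=M and k=k and x=u] PQ by simp
  also have "\<dots> = u $ k * c" by (simp add: det_mul detP detQ)
  finally show ?thesis using uk by (simp add: M_def c_def)
qed

section \<open>Positive definite matrices\<close>

definition pos_semidef :: "real^'n^'n \<Rightarrow> bool" where
  "pos_semidef A \<longleftrightarrow> transpose A = A \<and> (\<forall>x. 0 \<le> x \<bullet> (A *v x))"

definition pos_def :: "real^'n^'n \<Rightarrow> bool" where
  "pos_def A \<longleftrightarrow> transpose A = A \<and> (\<forall>x. x \<noteq> 0 \<longrightarrow> 0 < x \<bullet> (A *v x))"

lemma pos_def_imp_pos_semidef: "pos_def A \<Longrightarrow> pos_semidef A"
  unfolding pos_def_def pos_semidef_def
  by (metis inner_zero_left order.strict_implies_order order_refl)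

lemma pos_semidef_nth_sym:
  assumes "pos_semidef M"
  shows "M$i$j = M$j$i"
proof -
  have "transpose M $ j $ i = M $ j $ i" using assms by (simp add: pos_semidef_def)
  then show ?thesis by (simp add: transpose_def)
qed

lemma pos_semidef_cauchy_schwarz:
  fixes M :: "real^'n^'n"
  assumes "pos_semidef M"
  shows "(x \<bullet> (M *v v))\<^sup>2 \<le> (x \<bullet> (M *v x)) * (v \<bullet> (M *v v))"
proof -
  define a b s where "a = x \<bullet> (M *v x)" and "b = x \<bullet> (M *v v)" and "s = v \<bullet> (M *v v)"
  have sym: "transpose M = M" and psd: "\<And>z. 0 \<le> z \<bullet> (M *v z)"
    using assms by (auto simp: pos_semidef_def)
  have "v \<bullet> (M *v x) = b" unfolding b_def by (rule inner_matrix_vector_symmetric[OF sym])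
  then have quad: "0 \<le> a + 2 * r * b + r\<^sup>2 * s" for r
    using psd[of "x + r *\<^sub>R v"]
    by (simp add: matrix_vector_right_distrib matrix_vector_mult_scaleR inner_add_left
        inner_add_right
        a_def s_def b_def power2_eq_square algebra_simps)
  show ?thesis
  proof (cases "s = 0")
    case True
    \<comment> \<open>a nonnegative affine function of \<open>r\<close> is constant\<close>
    have "b = 0"
      using quad[of "- (a + 1) / (2 * b)"] True by (cases "b = 0") (simp_all add: field_simps)
    then show ?thesis using True by (simp add: a_def b_def s_def)
  next
    case False
    then have "0 < s" using psd[of v] s_def by linarith
    then show ?thesis
      using quad[of "- b / s"] by (simp add: a_def b_def s_def field_simps power2_eq_square)
  qed
qed

lemma pos_semidef_diag_nonneg: "pos_semidef M \<Longrightarrow> 0 \<le> M$i$i"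
  by (metis inner_axis_matrix_axis pos_semidef_def)

lemma pos_semidef_offdiag_sq_le: "pos_semidef M \<Longrightarrow> (M$i$j)\<^sup>2 \<le> M$i$i * M$j$j"
  using pos_semidef_cauchy_schwarz[of M "axis i 1" "axis j 1"] by (simp add: inner_axis_matrix_axis)

lemma pos_semidef_scaleR_outer: "0 \<le> c \<Longrightarrow> pos_semidef (c *\<^sub>R outer v v)"
  by (simp add: pos_semidef_def transpose_scalar transpose_outer inner_outer_mult_vec
      flip: scaleR_matrix_vector_assoc)

lemma pos_def_add_pos_semidef: "pos_def A \<Longrightarrow> pos_semidef B \<Longrightarrow> pos_def (A + B)"
  unfolding pos_def_def pos_semidef_def
  by (simp add: matrix_vector_mult_add_rdistrib inner_add_right add_pos_nonneg vec_eq_iff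
      transpose_def)

lemma pos_def_det_nonzero:
  assumes "pos_def A"
  shows "det A \<noteq> 0"
proof
  assume "det A = 0"
  then have "\<not> (\<forall>x. A *v x = 0 \<longrightarrow> x = 0)"
    by (metis invertible_det_nz invertible_left_inverse matrix_left_invertible_ker)
  then show False
    using assms by (auto simp: pos_def_def)
qed

text \<open>The segment from \<open>mat 1\<close> to \<open>A\<close> stays positive definite, so the continuous function \<open>det\<close>
  never vanishes on it and keeps the sign of \<open>det (mat 1) = 1\<close>.\<close>

lemma pos_def_det_pos:
  fixes A :: "real^'n^'n"
  assumes "pos_def A"
  shows "0 < det A"
proof (rule ccontr)
  assume "\<not> 0 < det A"
  define f where "f r = det ((1 - r) *\<^sub>R mat 1 + r *\<^sub>R A)" for r :: real
  have "continuous_on {0..1} f"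
    unfolding f_def det_def by (intro continuous_intros)
  then obtain r where r: "0 \<le> r" "r \<le> 1" "f r = 0"
    using IVT2'[of f 1 0 0] \<open>\<not> 0 < det A\<close> by (auto simp: f_def)
  have "pos_def ((1 - r) *\<^sub>R mat 1 + r *\<^sub>R A)"
  proof -
    have "0 < (1 - r) * (x \<bullet> x) + r * (x \<bullet> (A *v x))" if "x \<noteq> 0" for x
      using r assms that unfolding pos_def_def
      by (cases "r = 0") (auto intro: add_nonneg_pos add_pos_nonneg)
    moreover have "transpose A = A" using assms by (simp add: pos_def_def)
    ultimately show ?thesis
      by (simp add: pos_def_def matrix_vector_mult_add_rdistrib inner_add_right transpose_add
          transpose_scalar matrix_vector_mul_lid flip: scaleR_matrix_vector_assoc)
  qed
  then show False using pos_def_det_nonzero r(3) unfolding f_def by blast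
qed

lemma pos_semidef_matrix_inv:
  assumes "pos_def A"
  shows "pos_semidef (matrix_inv A)"
proof -
  have nz: "det A \<noteq> 0" by (rule pos_def_det_nonzero[OF assms])
  have "0 \<le> z \<bullet> (matrix_inv A *v z)" for z
  proof -
    define y where "y = matrix_inv A *v z"
    have "z = A *v y" unfolding y_def by (simp add: matrix_vector_mul_matrix_inv[OF nz])
    then have "z \<bullet> y = y \<bullet> (A *v y)" by (simp add: inner_commute)
    also have "\<dots> \<ge> 0" using assms by (cases "y = 0") (auto simp: pos_def_def less_imp_le)
    finally show ?thesis by (simp add: y_def)
  qed
  then show ?thesis
    using transpose_matrix_inv_symmetric[OF _ nz] assms by (simp add: pos_semidef_def pos_def_def)
qed

lemma wnorm_sq_inv_nonneg: "pos_def A \<Longrightarrow> 0 \<le> wnorm_sq_inv A x"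
  using pos_semidef_matrix_inv unfolding wnorm_sq_inv_def pos_semidef_def by blast

lemma wnorm_sq_inv_cauchy_schwarz:
  assumes "pos_def A"
  shows "(v \<bullet> (matrix_inv A *v x))\<^sup>2 \<le> wnorm_sq_inv A x * wnorm_sq_inv A v"
  using pos_semidef_cauchy_schwarz[OF pos_semidef_matrix_inv[OF assms], of v x]
  by (simp add: wnorm_sq_inv_def mult.commute)

lemma matrix_vector_mul_mat: "(mat c :: real^'n^'n) *v x = c *\<^sub>R x"
proof -
  have "(mat c :: real^'n^'n) = c *\<^sub>R mat 1" by (simp add: vec_eq_iff mat_def)
  then show ?thesis by (simp add: matrix_vector_mul_lid flip: scaleR_matrix_vector_assoc)
qed

lemma pos_def_mat: "0 < c \<Longrightarrow> pos_def (mat c :: real^'n^'n)"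
  by (simp add: pos_def_def matrix_vector_mul_mat)

lemma det_mat: "det (mat c :: real^'n^'n) = c ^ CARD('n)"
  by (simp add: det_diagonal mat_def)

lemma wnorm_sq_inv_mat:
  assumes "0 < c"
  shows "wnorm_sq_inv (mat c :: real^'n^'n) x = (x \<bullet> x) / c"
proof -
  have "det (mat c :: real^'n^'n) \<noteq> 0" using assms by (simp add: det_mat)
  then have "c *\<^sub>R (matrix_inv (mat c :: real^'n^'n) *v x) = x"
    using matrix_vector_mul_matrix_inv(1) matrix_vector_mul_mat by metis
  then have "(1 / c) *\<^sub>R c *\<^sub>R (matrix_inv (mat c :: real^'n^'n) *v x) = (1 / c) *\<^sub>R x"
    by simp
  then show ?thesis using assms by (simp add: wnorm_sq_inv_def)
qed

lemma trace_mat: "trace (mat c :: real^'n^'n) = real CARD('n) * c"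
  by (simp add: trace_def mat_def)

section \<open>Rank-one updates\<close>

lemma det_add_scaleR_outer:
  fixes A :: "real^'n^'n"
  assumes "det A \<noteq> 0"
  shows "det (A + c *\<^sub>R outer v v) = det A * (1 + c * wnorm_sq_inv A v)"
proof -
  have "A + c *\<^sub>R outer v v = A ** (mat 1 + outer (c *\<^sub>R (matrix_inv A *v v)) v)"
    by (simp add: matrix_add_ldistrib matrix_mul_outer matrix_vector_mult_scaleR
        matrix_vector_mul_matrix_inv[OF assms] scaleR_outer)
  then show ?thesis
    by (simp add: det_mul det_mat1_add_outer wnorm_sq_inv_def inner_commute)
qed

lemma pos_def_add_scaleR_outer: "pos_def A \<Longrightarrow> 0 \<le> c \<Longrightarrow> pos_def (A + c *\<^sub>R outer v v)"
  by (simp add: pos_def_add_pos_semidef pos_semidef_scaleR_outer)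

lemma wnorm_sq_inv_add_scaleR_outer:
  assumes "pos_def A" "0 \<le> c"
  shows "wnorm_sq_inv (A + c *\<^sub>R outer v v) x
           = wnorm_sq_inv A x - c * (v \<bullet> (matrix_inv A *v x))\<^sup>2 / (1 + c * wnorm_sq_inv A v)"
proof -
  define B where "B = A + c *\<^sub>R outer v v"
  have nzA: "det A \<noteq> 0" and nzB: "det B \<noteq> 0"
    using pos_def_det_nonzero pos_def_add_scaleR_outer assms by (auto simp: B_def)
  define y a b s where "y = matrix_inv B *v x" and "a = wnorm_sq_inv A x"
    and "b = v \<bullet> (matrix_inv A *v x)" and "s = wnorm_sq_inv A v"
  have pos: "0 < 1 + c * s" using wnorm_sq_inv_nonneg[OF assms(1)] assms(2)
    by (simp add: s_def add_pos_nonneg)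
  have "B *v y = x" unfolding y_def by (rule matrix_vector_mul_matrix_inv(1)[OF nzB])
  then have "A *v y + (c * (v \<bullet> y)) *\<^sub>R v = x"
    by (simp add: B_def matrix_vector_mult_add_rdistrib outer_mult_vec flip:
        scaleR_matrix_vector_assoc)
  then have "matrix_inv A *v (A *v y + (c * (v \<bullet> y)) *\<^sub>R v) = matrix_inv A *v x" by simp
  then have y: "y = matrix_inv A *v x - (c * (v \<bullet> y)) *\<^sub>R (matrix_inv A *v v)"
    by (simp add: matrix_vector_right_distrib matrix_vector_mult_scaleR
        matrix_vector_mul_matrix_inv(2)[OF nzA] algebra_simps)
  have "v \<bullet> y = b - c * (v \<bullet> y) * s"
    by (subst y) (simp add: b_def s_def wnorm_sq_inv_def inner_diff_right)
  then have vy: "v \<bullet> y = b / (1 + c * s)"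
    using pos by (simp add: field_simps)
  have xAv: "x \<bullet> (matrix_inv A *v v) = b"
    unfolding b_def using pos_semidef_matrix_inv[OF assms(1)]
    by (simp add: pos_semidef_def inner_matrix_vector_symmetric)
  have "x \<bullet> y = a - c * (v \<bullet> y) * b"
    by (subst y) (simp add: a_def wnorm_sq_inv_def inner_diff_right xAv)
  also have "\<dots> = a - c * b\<^sup>2 / (1 + c * s)" by (simp add: vy power2_eq_square)
  finally show ?thesis by (simp add: wnorm_sq_inv_def y_def B_def a_def b_def s_def)
qed

lemma wnorm_sq_inv_add_scaleR_outer_le:
  assumes "pos_def A" "0 \<le> c"
  shows "wnorm_sq_inv (A + c *\<^sub>R outer v v) x \<le> wnorm_sq_inv A x"
  using wnorm_sq_inv_add_scaleR_outer[OF assms, of v x] wnorm_sq_inv_nonneg[OF assms(1), of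
      v] assms(2)
  by (simp add: divide_nonneg_pos add_pos_nonneg)

lemma wnorm_sq_inv_le_add_scaleR_outer:
  assumes "pos_def A" "0 \<le> c"
  shows "wnorm_sq_inv A x \<le> (1 + c * wnorm_sq_inv A v) * wnorm_sq_inv (A + c *\<^sub>R outer v v) x"
proof -
  define a b s where "a = wnorm_sq_inv A x" and "b = v \<bullet> (matrix_inv A *v x)"
    and "s = wnorm_sq_inv A v"
  have "b\<^sup>2 \<le> a * s" unfolding a_def b_def s_def by (rule wnorm_sq_inv_cauchy_schwarz[OF assms(1)])
  moreover have "0 < 1 + c * s"
    using wnorm_sq_inv_nonneg[OF assms(1)] assms(2) by (simp add: s_def add_pos_nonneg)
  ultimately have "a \<le> a + c * (a * s - b\<^sup>2)"
    using assms(2) by simp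
  also have "\<dots> = (1 + c * s) * (a - c * b\<^sup>2 / (1 + c * s))"
    using \<open>0 < 1 + c * s\<close> by (simp add: field_simps)
  finally have "a \<le> (1 + c * s) * (a - c * b\<^sup>2 / (1 + c * s))" .
  then show ?thesis using wnorm_sq_inv_add_scaleR_outer[OF assms, of v x]
    by (simp add: a_def b_def s_def)
qed

inductive rank_one_updates :: "real^'n^'n \<Rightarrow> real^'n^'n \<Rightarrow> bool" for A where
  rank_one_updates_refl: "rank_one_updates A A"
| rank_one_updates_step: "rank_one_updates A B \<Longrightarrow> 0 \<le> c \<Longrightarrow> rank_one_updates A (B + c *\<^sub>R outer v v)"

lemma rank_one_updates_trans: "rank_one_updates B C \<Longrightarrow> rank_one_updates A B \<Longrightarrow> rank_one_updates A C"
  by (induction rule: rank_one_updates.induct) (auto intro: rank_one_updates_step)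

lemma rank_one_updates_add_sum:
  assumes "finite F" "\<And>i. i \<in> F \<Longrightarrow> 0 \<le> c i"
  shows "rank_one_updates A (A + (\<Sum>i\<in>F. c i *\<^sub>R outer (v i) (v i)))"
  using assms
proof (induction F rule: finite_induct)
  case empty
  then show ?case by (simp add: rank_one_updates_refl)
next
  case (insert j F)
  then have "rank_one_updates A (A + (\<Sum>i\<in>F. c i *\<^sub>R outer (v i) (v i)) + c j *\<^sub>R outer (v j) (v j))"
    by (intro rank_one_updates_step) auto
  then show ?case using insert by (simp add: add_ac)
qed

lemma rank_one_updates_pos_def: "rank_one_updates A B \<Longrightarrow> pos_def A \<Longrightarrow> pos_def B"
  by (induction rule: rank_one_updates.induct) (auto intro: pos_def_add_scaleR_outer)

lemma rank_one_updates_det_mono: "rank_one_updates A B \<Longrightarrow> pos_def A \<Longrightarrow> det A \<le> det B"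
proof (induction rule: rank_one_updates.induct)
  case (rank_one_updates_step B c v)
  have B: "pos_def B" using rank_one_updates_pos_def rank_one_updates_step by blast
  have "det B \<le> det B * (1 + c * wnorm_sq_inv B v)"
    using wnorm_sq_inv_nonneg[OF B, of v] pos_def_det_pos[OF B] rank_one_updates_step(2) by simp
  then show ?case
    using rank_one_updates_step det_add_scaleR_outer[OF pos_def_det_nonzero[OF B], of c v] by simp
qed simp

lemma rank_one_updates_wnorm_sq_inv_le:
  "rank_one_updates A B \<Longrightarrow> pos_def A \<Longrightarrow> wnorm_sq_inv B x \<le> wnorm_sq_inv A x"
proof (induction rule: rank_one_updates.induct)
  case (rank_one_updates_step B c v)
  then show ?case
    using wnorm_sq_inv_add_scaleR_outer_le[of B c v x] rank_one_updates_pos_def by fastforce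
qed simp

lemma rank_one_updates_wnorm_sq_inv_le_det_ratio:
  "rank_one_updates A B \<Longrightarrow> pos_def A \<Longrightarrow> wnorm_sq_inv A x \<le> det B / det A * wnorm_sq_inv B x"
proof (induction rule: rank_one_updates.induct)
  case rank_one_updates_refl
  then show ?case using pos_def_det_nonzero[of A] by simp
next
  case (rank_one_updates_step B c v)
  have B: "pos_def B" using rank_one_updates_pos_def rank_one_updates_step by blast
  have "wnorm_sq_inv A x \<le> det B / det A * wnorm_sq_inv B x" using rank_one_updates_step by simp
  also have "\<dots> \<le> det B / det A
      * ((1 + c * wnorm_sq_inv B v) * wnorm_sq_inv (B + c *\<^sub>R outer v v) x)"
    using wnorm_sq_inv_le_add_scaleR_outer[OF B rank_one_updates_step(2), of x v]
      pos_def_det_pos[OF B] pos_def_det_pos[OF rank_one_updates_step(4)]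
    by (intro mult_left_mono) auto
  also have "\<dots> = det (B + c *\<^sub>R outer v v) / det A * wnorm_sq_inv (B + c *\<^sub>R outer v v) x"
    by (simp add: det_add_scaleR_outer[OF pos_def_det_nonzero[OF B]])
  finally show ?case .
qed

section \<open>Hadamard's inequality\<close>

text \<open>One step of symmetric Gaussian elimination: row and column \<open>k\<close> of \<open>B\<close> are cleared and
  replaced by those of the identity.\<close>

definition schur_complement_at :: "'n \<Rightarrow> real^'n^'n \<Rightarrow> real^'n^'n" where
  "schur_complement_at k B =
     B - (1 / B$k$k) *\<^sub>R outer (column k B) (column k B) + outer (axis k 1) (axis k 1)"

lemma schur_complement_at_nth:
  "schur_complement_at k B $ i $ j
     = B$i$j - B$i$k * B$j$k / B$k$k + (if i = k \<and> j = k then 1 else 0)"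
  by (simp add: schur_complement_at_def outer_def column_def axis_def)

lemma schur_complement_at_pivot:
  assumes "transpose B = B" "B$k$k \<noteq> 0"
  shows "schur_complement_at k B $ k $ j = (if j = k then 1 else 0)"
    and "schur_complement_at k B $ j $ k = (if j = k then 1 else 0)"
proof -
  have "B$k$j = B$j$k" using assms(1) by (metis transpose_def vec_lambda_beta)
  then show "schur_complement_at k B $ k $ j = (if j = k then 1 else 0)"
    and "schur_complement_at k B $ j $ k = (if j = k then 1 else 0)"
    using assms(2) by (simp_all add: schur_complement_at_nth)
qed

lemma det_eq_pivot_mult_det_schur_complement_at:
  fixes B :: "real^'n^'n"
  assumes sym: "transpose B = B" and pivot: "B$k$k \<noteq> 0"
  shows "det B = B$k$k * det (schur_complement_at k B)"
proof -
  define a C where "a = B$k$k" and "C = schur_complement_at k B"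
  define w where "w = (1 / a) *\<^sub>R column k B - axis k 1"
  define r where "r = row k B - a *s row k C"
  define Y where "Y = (\<chi> i. if i = k then a *s row k C + r else row i C)"
  have a: "a \<noteq> 0" using pivot by (simp add: a_def)
  have Bsym: "B$i$j = B$j$i" for i j using sym by (metis transpose_def vec_lambda_beta)
  have Cij: "C$i$j = B$i$j - B$i$k * B$k$j / a + (if i = k \<and> j = k then 1 else 0)" for i j
    by (simp add: C_def a_def schur_complement_at_nth Bsym[of j k])
  \<comment> \<open>\<open>B\<close> arises from \<open>Y\<close> by adding multiples of row \<open>k\<close> to the other rows, and row \<open>k\<close> of \<open>Y\<close>
      splits into \<open>a\<close> times row \<open>k\<close> of \<open>C\<close> plus a row that makes column \<open>k\<close> vanish.\<close>
  have "(mat 1 + outer w (axis k 1)) ** Y = Y + outer w (row k Y)"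
    by (simp add: matrix_add_rdistrib outer_matrix_mul matrix_vector_mult_basis)
  also have "\<dots> = B"
    using a
    by (auto simp: vec_eq_iff outer_def Y_def r_def row_def w_def column_def axis_def Cij a_def)
  finally have "det B = det (mat 1 + outer w (axis k 1)) * det Y"
    by (metis det_mul)
  also have "det (mat 1 + outer w (axis k 1)) = 1"
    using a by (simp add: det_mat1_add_outer w_def inner_diff_left inner_axis column_def a_def)
  also have "det Y = det (\<chi> i. if i = k then a *s row k C else row i C)
      + det (\<chi> i. if i = k then r else row i C)"
    unfolding Y_def by (rule det_row_add)
  also have "det (\<chi> i. if i = k then a *s row k C else row i C) = a * det C"
  proof -
    have "(\<chi> i. if i = k then row k C else row i C) = C" by (simp add: vec_eq_iff row_def)
    then show ?thesis using det_row_mul[of k a "\<lambda>i. row k C" "\<lambda>i. row i C"] by simp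
  qed
  also have "det (\<chi> i. if i = k then r else row i C) = 0"
    using a
    by (intro det_zero_column[of k]) (auto simp: vec_eq_iff column_def row_def r_def Cij a_def)
  finally show ?thesis by (simp add: a_def C_def)
qed

lemma pos_semidef_schur_complement_at:
  assumes "pos_semidef B" "0 < B$k$k"
  shows "pos_semidef (schur_complement_at k B)"
proof -
  define a b where "a = B$k$k" and "b = column k B"
  have Bsym: "B$i$j = B$j$i" for i j by (rule pos_semidef_nth_sym[OF assms(1)])
  have "0 \<le> z \<bullet> (schur_complement_at k B *v z)" for z
  proof -
    have "(b \<bullet> z)\<^sup>2 \<le> (z \<bullet> (B *v z)) * a"
      using pos_semidef_cauchy_schwarz[OF assms(1), of z "axis k 1"] inner_axis_matrix_axis[of k
          B k]
      by (simp add: matrix_vector_mult_basis a_def b_def inner_commute)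
    then have "(b \<bullet> z)\<^sup>2 / a \<le> z \<bullet> (B *v z)"
      using assms(2) by (simp add: a_def divide_le_eq)
    moreover have "schur_complement_at k B *v z
        = B *v z - ((b \<bullet> z) / a) *\<^sub>R b + (axis k 1 \<bullet> z) *\<^sub>R axis k 1"
      by (simp add: schur_complement_at_def a_def b_def matrix_vector_mult_add_rdistrib
          matrix_vector_mult_diff_rdistrib outer_mult_vec flip: scaleR_matrix_vector_assoc)
    then have "z \<bullet> (schur_complement_at k B *v z) = z \<bullet> (B *v z) - (b \<bullet> z)\<^sup>2 / a + (axis k 1 \<bullet> z)\<^sup>2"
      by (simp add: inner_add_right inner_diff_right power2_eq_square inner_commute)
    ultimately show ?thesis by simp
  qed
  moreover have "transpose (schur_complement_at k B) = schur_complement_at k B"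
    by (simp add: vec_eq_iff transpose_def schur_complement_at_nth Bsym mult.commute conj_commute)
  ultimately show ?thesis by (simp add: pos_semidef_def)
qed

lemma schur_complement_at_eq_mat1_outside:
  assumes "transpose B = B" "B$k$k \<noteq> 0"
    and "\<And>i j. i \<notin> insert k J \<or> j \<notin> insert k J \<Longrightarrow> B$i$j = (if i = j then 1 else 0)"
    and "i \<notin> J \<or> j \<notin> J"
  shows "schur_complement_at k B $ i $ j = (if i = j then 1 else 0)"
proof (cases "i = k \<or> j = k")
  case True
  then show ?thesis using schur_complement_at_pivot[OF assms(1,2)] by auto
next
  case False
  then have out: "i \<notin> insert k J \<or> j \<notin> insert k J" using assms(4) by auto
  then have "B$i$j = (if i = j then 1 else 0)" by (rule assms(3))
  moreover have "B$i$k * B$j$k = 0"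
    using out False assms(3)[of i k] assms(3)[of j k] by auto
  ultimately show ?thesis using False by (simp add: schur_complement_at_nth)
qed

lemma det_le_prod_diag_on:
  fixes B :: "real^'n^'n"
  assumes "pos_semidef B" "\<And>i j. i \<notin> J \<or> j \<notin> J \<Longrightarrow> B$i$j = (if i = j then 1 else 0)"
  shows "det B \<le> (\<Prod>i\<in>J. B$i$i)"
  using finite[of J] assms
proof (induction J arbitrary: B rule: finite_induct)
  case empty
  then have "B = mat 1" by (simp add: vec_eq_iff mat_def)
  then show ?case by simp
next
  case (insert k J)
  have diag: "0 \<le> B$i$i" for i by (rule pos_semidef_diag_nonneg[OF insert.prems(1)])
  show ?case
  proof (cases "B$k$k = 0")
    case True
    then have "row k B = 0"
      using pos_semidef_offdiag_sq_le[OF insert.prems(1), of k] by (simp add: row_def vec_eq_iff)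
    then show ?thesis using diag by (simp add: det_zero_row prod_nonneg)
  next
    case False
    then have a: "0 < B$k$k" using diag[of k] by simp
    define C where "C = schur_complement_at k B"
    have C: "pos_semidef C" unfolding C_def
      by (rule pos_semidef_schur_complement_at[OF insert.prems(1) a])
    have "C$i$j = (if i = j then 1 else 0)" if "i \<notin> J \<or> j \<notin> J" for i j
      unfolding C_def using insert.prems a that insert.hyps(2)
      by (intro schur_complement_at_eq_mat1_outside) (auto simp: pos_semidef_def)
    then have IH: "det C \<le> (\<Prod>i\<in>J. C$i$i)" by (rule insert.IH[OF C])
    have "C$i$i \<le> B$i$i" if "i \<in> J" for i
    proof -
      have "i \<noteq> k" using that insert.hyps(2) by auto
      then have "C$i$i = B$i$i - (B$i$k)\<^sup>2 / B$k$k"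
        by (simp add: C_def schur_complement_at_nth power2_eq_square)
      then show ?thesis using a by simp
    qed
    then have "(\<Prod>i\<in>J. C$i$i) \<le> (\<Prod>i\<in>J. B$i$i)"
      by (intro prod_mono) (simp add: pos_semidef_diag_nonneg[OF C])
    with IH have "det C \<le> (\<Prod>i\<in>J. B$i$i)" by linarith
    moreover have "det B = B$k$k * det C"
      unfolding C_def using insert.prems(1) False
      by (intro det_eq_pivot_mult_det_schur_complement_at) (auto simp: pos_semidef_def)
    ultimately have "det B \<le> B$k$k * (\<Prod>i\<in>J. B$i$i)"
      using a by (simp add: mult_left_mono)
    then show ?thesis using insert.hyps by simp
  qed
qed

lemma det_le_prod_diag: "pos_semidef (B::real^'n^'n) \<Longrightarrow> det B \<le> (\<Prod>i\<in>UNIV. B$i$i)"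
  by (rule det_le_prod_diag_on) auto

lemma det_le_trace_power:
  fixes B :: "real^'n^'n"
  assumes "pos_semidef B"
  shows "det B \<le> (trace B / CARD('n)) ^ CARD('n)"
proof -
  define P where "P = (\<Prod>i\<in>UNIV. B$i$i)"
  have diag: "0 \<le> B$i$i" for i by (rule pos_semidef_diag_nonneg[OF assms])
  have "P powr (1 / CARD('n)) \<le> (\<Sum>i\<in>UNIV. B$i$i / CARD('n))"
    unfolding P_def by (rule arith_geom_mean) (auto simp: diag)
  also have "\<dots> = trace B / CARD('n)"
    by (simp add: trace_def sum_divide_distrib)
  finally have am: "P powr (1 / CARD('n)) \<le> trace B / CARD('n)" .
  have "P \<le> (trace B / CARD('n)) ^ CARD('n)"
  proof (cases "P = 0")
    case True
    then show ?thesis using am by simp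
  next
    case False
    have "P = (P powr (1 / CARD('n))) ^ CARD('n)"
      using False diag by (simp add: P_def powr_power prod_nonneg)
    also have "\<dots> \<le> (trace B / CARD('n)) ^ CARD('n)"
      by (rule power_mono[OF am]) simp
    finally show ?thesis .
  qed
  then show ?thesis using det_le_prod_diag[OF assms] by (simp add: P_def)
qed

section \<open>The MNL Hessian\<close>

lemma mnl_prob_pos: "finite S \<Longrightarrow> s \<in> S \<Longrightarrow> 0 < mnl_prob phi S \<theta> s"
  unfolding mnl_prob_def by (intro divide_pos_pos sum_pos) auto

lemma sum_mnl_prob:
  assumes "finite S" "S \<noteq> {}"
  shows "(\<Sum>s\<in>S. mnl_prob phi S \<theta> s) = 1"
proof -
  have "0 < (\<Sum>s\<in>S. exp (phi s \<bullet> \<theta>))" using assms by (intro sum_pos) auto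
  then show ?thesis unfolding mnl_prob_def by (simp flip: sum_divide_distrib)
qed

lemma covariance_eq_sum_pairs:
  fixes p f g :: "'s \<Rightarrow> real"
  assumes "finite S" "(\<Sum>i\<in>S. p i) = 1"
  shows "(\<Sum>i\<in>S. \<Sum>j\<in>S. p i * p j / 2 * ((f i - f j) * (g i - g j)))
         = (\<Sum>i\<in>S. p i * f i * g i) - (\<Sum>i\<in>S. p i * f i) * (\<Sum>i\<in>S. p i * g i)"
proof -
  define F G H where "F = (\<Sum>i\<in>S. p i * f i)" and "G = (\<Sum>i\<in>S. p i * g i)"
    and "H = (\<Sum>i\<in>S. p i * f i * g i)"
  have inner: "(\<Sum>j\<in>S. p i * p j / 2 * ((f i - f j) * (g i - g j)))
      = p i / 2 * (f i * g i - f i * G - g i * F + H)" for i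
  proof -
    have "(\<Sum>j\<in>S. p i * p j / 2 * ((f i - f j) * (g i - g j)))
       = p i / 2 * (\<Sum>j\<in>S. f i * g i * p j - f i * (p j * g j) - g i * (p j * f j)
           + p j * f j * g j)"
      by (simp add: sum_distrib_left algebra_simps)
    also have "(\<Sum>j\<in>S. f i * g i * p j - f i * (p j * g j) - g i * (p j * f j) + p j * f j * g j)
        = f i * g i * (\<Sum>j\<in>S. p j) - f i * G - g i * F + H"
      by (simp only: F_def G_def H_def sum.distrib sum_subtractf sum_distrib_left)
    finally show ?thesis using assms(2) by simp
  qed
  have "(\<Sum>i\<in>S. \<Sum>j\<in>S. p i * p j / 2 * ((f i - f j) * (g i - g j)))
      = (\<Sum>i\<in>S. 1/2 * (p i * f i * g i) - 1/2 * G * (p i * f i) - 1/2 * F * (p i * g i)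
          + 1/2 * H * p i)"
    unfolding inner by (rule sum.cong) (auto simp: algebra_simps)
  also have "\<dots> = 1/2 * H - 1/2 * G * F - 1/2 * F * G + 1/2 * H * (\<Sum>i\<in>S. p i)"
    by (simp only: sum.distrib sum_subtractf F_def G_def H_def flip: sum_distrib_left)
  also have "\<dots> = H - F * G" using assms(2) by simp
  finally show ?thesis by (simp add: F_def G_def H_def)
qed

lemma mnl_hess_eq_sum_pairs:
  assumes "finite S" "S \<noteq> {}"
  shows "mnl_hess phi S \<theta> = (\<Sum>m\<in>S \<times> S. (mnl_prob phi S \<theta> (fst m) * mnl_prob phi S \<theta> (snd m) / 2)
            *\<^sub>R outer (phi (fst m) - phi (snd m)) (phi (fst m) - phi (snd m)))"
proof -
  define p where "p = mnl_prob phi S \<theta>"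
  have "(\<Sum>m\<in>S \<times> S. (p (fst m) * p (snd m) / 2)
            *\<^sub>R outer (phi (fst m) - phi (snd m)) (phi (fst m) - phi (snd m)))$a$b
        = (\<Sum>i\<in>S. \<Sum>j\<in>S. p i * p j / 2 * ((phi i$a - phi j$a) * (phi i$b - phi j$b)))" for a b
    by (simp add: sum_component outer_def sum.cartesian_product split_def)
  also have "\<dots> a b
      = (\<Sum>i\<in>S. p i * phi i$a * phi i$b) - (\<Sum>i\<in>S. p i * phi i$a) * (\<Sum>i\<in>S. p i * phi i$b)"
    for a b
    by (rule covariance_eq_sum_pairs[OF assms(1)]) (simp add: p_def sum_mnl_prob[OF assms])
  also have "\<dots> a b = (mnl_hess phi S \<theta>)$a$b" for a b
    by (simp add: mnl_hess_def Let_def sum_component outer_def p_def mult.assoc)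
  finally show ?thesis by (simp add: vec_eq_iff p_def)
qed

lemma trace_mnl_hess_le:
  assumes "finite S" "S \<noteq> {}" "\<And>s. s \<in> S \<Longrightarrow> norm (phi s) \<le> L"
  shows "trace (mnl_hess phi S \<theta>) \<le> L\<^sup>2"
proof -
  define p where "p = mnl_prob phi S \<theta>"
  define m where "m = (\<Sum>s\<in>S. p s *\<^sub>R phi s)"
  have "trace (mnl_hess phi S \<theta>) = (\<Sum>s\<in>S. p s * (phi s \<bullet> phi s)) - m \<bullet> m"
    by (simp add: mnl_hess_def Let_def p_def[symmetric] m_def[symmetric] trace_sub trace_sum
        trace_scaleR trace_outer)
  also have "\<dots> \<le> (\<Sum>s\<in>S. p s * L\<^sup>2)"
  proof -
    have "p s * (phi s \<bullet> phi s) \<le> p s * L\<^sup>2" if "s \<in> S" for s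
      using assms(3)[OF that] mnl_prob_pos[OF assms(1) that, of phi \<theta>]
      by (simp add: p_def power2_norm_eq_inner[symmetric] power_mono)
    then have "(\<Sum>s\<in>S. p s * (phi s \<bullet> phi s)) \<le> (\<Sum>s\<in>S. p s * L\<^sup>2)"
      by (rule sum_mono)
    then show ?thesis using inner_ge_zero[of m] by linarith
  qed
  also have "\<dots> = L\<^sup>2" using sum_mnl_prob[OF assms(1,2), of phi \<theta>]
    by (simp add: p_def flip: sum_distrib_right)
  finally show ?thesis .
qed

lemma rank_one_updates_add_mnl_hess:
  assumes "finite S" "S \<noteq> {}"
  shows "rank_one_updates A (A + mnl_hess phi S \<theta>)"
  unfolding mnl_hess_eq_sum_pairs[OF assms]
  using assms less_imp_le[OF mnl_prob_pos[OF assms(1), of _ phi \<theta>]]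
  by (intro rank_one_updates_add_sum) (auto intro!: divide_nonneg_pos mult_nonneg_nonneg)

text \<open>Pairing \<open>j\<close> with a state \<open>s0\<close> of zero feature (in both orders) extracts
  \<open>p(s0) p(j) \<phi>(j) \<phi>(j)\<^sup>T\<close> from the Hessian.\<close>

lemma det_add_mnl_hess_ge:
  fixes A :: "real^'n^'n"
  assumes A: "pos_def A" and S: "finite S" and s0: "s0 \<in> S" "phi s0 = 0" and j: "j \<in> S"
    and kappa: "\<kappa> \<le> mnl_prob phi S \<theta> s0 * mnl_prob phi S \<theta> j"
  shows "det A * (1 + \<kappa> * wnorm_sq_inv A (phi j)) \<le> det (A + mnl_hess phi S \<theta>)"
proof (cases "j = s0")
  case True
  then have "wnorm_sq_inv A (phi j) = 0" using s0 by (simp add: wnorm_sq_inv_def)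
  then show ?thesis
    using rank_one_updates_det_mono[OF rank_one_updates_add_mnl_hess A] S s0 by auto
next
  case False
  define p where "p = mnl_prob phi S \<theta>"
  define c where "c m = p (fst m) * p (snd m) / 2" for m
  define v where "v m = phi (fst m) - phi (snd m)" for m
  define R where "R = S \<times> S - {(s0, j)} - {(j, s0)}"
  have s0_ne: "S \<noteq> {}" using s0 by auto
  have c: "0 \<le> c m" if "m \<in> S \<times> S" for m
    using that less_imp_le[OF mnl_prob_pos[OF S, of _ phi \<theta>]]
    by (auto simp: c_def p_def intro!: divide_nonneg_pos mult_nonneg_nonneg)
  have "mnl_hess phi S \<theta> = (\<Sum>m\<in>S \<times> S. c m *\<^sub>R outer (v m) (v m))"
    unfolding mnl_hess_eq_sum_pairs[OF S s0_ne] c_def v_def p_def ..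
  also have "\<dots> = c (s0, j) *\<^sub>R outer (v (s0, j)) (v (s0, j))
      + (c (j, s0) *\<^sub>R outer (v (j, s0)) (v (j, s0)) + (\<Sum>m\<in>R. c m *\<^sub>R outer (v m) (v m)))"
    using s0 j False S
    by (simp add: sum.remove[of "S \<times> S" "(s0, j)"] sum.remove[of "S \<times> S - {(s0, j)}" "(j, s0)"]
        R_def)
  also have "\<dots> = (p s0 * p j) *\<^sub>R outer (phi j) (phi j) + (\<Sum>m\<in>R. c m *\<^sub>R outer (v m) (v m))"
    by (simp add: c_def v_def s0 outer_minus_minus mult.commute flip: scaleR_add_left add.assoc)
  finally have H: "A + mnl_hess phi S \<theta>
      = (A + (p s0 * p j) *\<^sub>R outer (phi j) (phi j)) + (\<Sum>m\<in>R. c m *\<^sub>R outer (v m) (v m))"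
    by (simp add: add.assoc)
  have pp: "0 \<le> p s0 * p j"
    using mnl_prob_pos[OF S s0(1), of phi \<theta>] mnl_prob_pos[OF S j, of phi \<theta>] by (simp add: p_def)
  have "det A * (1 + \<kappa> * wnorm_sq_inv A (phi j))
      \<le> det A * (1 + p s0 * p j * wnorm_sq_inv A (phi j))"
    using kappa wnorm_sq_inv_nonneg[OF A] pos_def_det_pos[OF A]
    by (intro mult_left_mono) (auto simp: p_def intro: mult_right_mono)
  also have "\<dots> = det (A + (p s0 * p j) *\<^sub>R outer (phi j) (phi j))"
    by (rule det_add_scaleR_outer[OF pos_def_det_nonzero[OF A], symmetric])
  also have "\<dots> \<le> det (A + mnl_hess phi S \<theta>)"
    unfolding H using S c
    by (intro rank_one_updates_det_mono rank_one_updates_add_sum pos_def_add_scaleR_outer A pp)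
      (auto simp: R_def)
  finally show ?thesis .
qed

lemma Bsq_zero_features:
  assumes "\<And>s'. s' \<in> Ssa s a \<Longrightarrow> \<phi> s a s' = 0" "Ssa s a \<noteq> {}"
  shows "Bsq \<beta> \<Sigma> \<phi> Ssa n s a = 0"
proof -
  have "(\<lambda>s'. wnorm_sq_inv (\<Sigma> n) (\<phi> s a s')) ` Ssa s a = {0}"
    using assms by (auto simp: wnorm_sq_inv_def)
  then show ?thesis by (simp add: Bsq_def)
qed

lemma mnl_U_ge_one:
  assumes "\<And>s a. finite (Ssa s a)" "\<And>s a. Ssa s a \<noteq> {}"
  shows "1 \<le> mnl_U Ssa"
proof -
  fix s a
  have "card (Ssa s a) \<le> mnl_U Ssa"
    unfolding mnl_U_def by (rule Max_ge) (auto intro: image_eqI[where x="(s, a)"])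
  moreover have "0 < card (Ssa s a)" using assms by (simp add: card_gt_0_iff)
  ultimately show ?thesis by simp
qed

section \<open>Gram matrices along a trajectory\<close>

lemma ln_add_one_ge_half:
  fixes u :: real
  assumes "0 \<le> u" "u \<le> 1"
  shows "u / 2 \<le> ln (1 + u)"
proof -
  have "ln (1 / (1 + u)) \<le> 1 / (1 + u) - 1" using assms by (intro ln_le_minus_one) auto
  then have "u / (1 + u) \<le> ln (1 + u)" using assms by (simp add: ln_div field_simps)
  moreover have "u / 2 \<le> u / (1 + u)" using assms by (intro divide_left_mono) auto
  ultimately show ?thesis by linarith
qed

lemma sum_blocks_telescope:
  fixes g :: "nat \<Rightarrow> 'a::ab_group_add"
  assumes "\<And>k. 1 \<le> k \<Longrightarrow> k \<le> K \<Longrightarrow> tk k \<le> tk (Suc k)"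
  shows "(\<Sum>k = 1..K. \<Sum>t = tk k..<tk (Suc k). g (Suc t) - g t) = g (tk (Suc K)) - g (tk 1)"
proof -
  have "(\<Sum>k = 1..K. \<Sum>t = tk k..<tk (Suc k). g (Suc t) - g t)
      = (\<Sum>k = 1..<Suc K. g (tk (Suc k)) - g (tk k))"
    using assms by (intro sum.cong) (auto simp: sum_Suc_diff' atLeastLessThanSuc_atLeastAtMost)
  also have "\<dots> = g (tk (Suc K)) - g (tk 1)"
    by (rule sum_Suc_diff'[of 1 "Suc K" "\<lambda>k. g (tk k)"]) simp
  finally show ?thesis .
qed

lemma episode_start_bounds:
  fixes tk :: "nat \<Rightarrow> nat"
  assumes "tk 1 = 1" "tk (K + 1) = T + 1" "\<And>k. 1 \<le> k \<Longrightarrow> k \<le> K \<Longrightarrow> tk k < tk (k + 1)"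
    and "1 \<le> k" "k \<le> K"
  shows "1 \<le> tk k \<and> tk k \<le> T"
proof -
  have mono: "tk i \<le> tk j" if "1 \<le> i" "i \<le> j" "j \<le> K + 1" for i j
    using that(2,3)
  proof (induction j rule: dec_induct)
    case (step n)
    then show ?case using assms(3)[of n] that(1) by simp
  qed simp
  show ?thesis
    using mono[of 1 k] mono[of "k + 1" "K + 1"] assms by fastforce
qed

text \<open>\<open>ph t\<close> and \<open>S t\<close> are the features and the reachable set of the pair visited at step \<open>t\<close>, and
  \<open>\<theta> t\<close> is the estimate at which the Hessian of step \<open>t\<close> is evaluated (\<open>\<theta>hat (t + 1)\<close> in the
  theorem).\<close>

locale mnl_gram_sequence =
  fixes ph :: "nat \<Rightarrow> 's \<Rightarrow> real^'d" and S :: "nat \<Rightarrow> 's set" and \<theta> :: "nat \<Rightarrow> real^'d"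
    and \<Sigma> :: "nat \<Rightarrow> real^'d^'d" and lam L \<kappa> :: real
  assumes finite_S: "finite (S t)"
    and zero_feature: "\<exists>s\<in>S t. ph t s = 0"
    and norm_ph_le: "norm (ph t s) \<le> L"
    and kappa_pos: "0 < \<kappa>" and kappa_le_one: "\<kappa> \<le> 1"
    and prob_mult_prob_ge: "1 \<le> t \<Longrightarrow> s \<in> S t \<Longrightarrow> s' \<in> S t \<Longrightarrow>
           \<kappa> \<le> mnl_prob (ph t) (S t) (\<theta> t) s * mnl_prob (ph t) (S t) (\<theta> t) s'"
    and lam_pos: "0 < lam" and L_sq_le_lam: "L\<^sup>2 \<le> lam"
    and Sigma_1: "\<Sigma> 1 = mat lam"
    and Sigma_Suc: "1 \<le> t \<Longrightarrow> \<Sigma> (Suc t) = \<Sigma> t + mnl_hess (ph t) (S t) (\<theta> t)"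
begin

lemma S_nonempty: "S t \<noteq> {}"
  using zero_feature by blast

lemma Sigma_rank_one_updates:
  assumes "1 \<le> t" "t \<le> t'"
  shows "rank_one_updates (\<Sigma> t) (\<Sigma> t')"
  using assms(2)
proof (induction t' rule: dec_induct)
  case base
  show ?case by (rule rank_one_updates_refl)
next
  case (step n)
  then have "rank_one_updates (\<Sigma> n) (\<Sigma> (Suc n))"
    using assms(1) by (simp add: Sigma_Suc rank_one_updates_add_mnl_hess finite_S S_nonempty)
  then show ?case using step.IH rank_one_updates_trans by blast
qed

lemma Sigma_pos_def: "1 \<le> t \<Longrightarrow> pos_def (\<Sigma> t)"
  using rank_one_updates_pos_def[OF Sigma_rank_one_updates[of 1 t]] pos_def_mat[OF lam_pos]
  unfolding Sigma_1 by simp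

lemma det_Sigma_pos: "1 \<le> t \<Longrightarrow> 0 < det (\<Sigma> t)"
  by (simp add: Sigma_pos_def pos_def_det_pos)

lemma wnorm_sq_inv_Sigma_le_one:
  assumes "1 \<le> t"
  shows "wnorm_sq_inv (\<Sigma> t) (ph t' s) \<le> 1"
proof -
  have "wnorm_sq_inv (\<Sigma> t) (ph t' s) \<le> wnorm_sq_inv (\<Sigma> 1) (ph t' s)"
    using rank_one_updates_wnorm_sq_inv_le[OF Sigma_rank_one_updates[OF _ assms]] Sigma_pos_def
    by simp
  also have "\<dots> = (norm (ph t' s))\<^sup>2 / lam"
    unfolding Sigma_1 by (simp add: wnorm_sq_inv_mat lam_pos power2_norm_eq_inner)
  also have "\<dots> \<le> 1"
    using power_mono[OF norm_ph_le[of t' s] norm_ge_zero, of 2] L_sq_le_lam lam_pos by simp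
  finally show ?thesis .
qed

lemma wnorm_sq_inv_Sigma_le_ln_det_growth:
  assumes "1 \<le> t" "j \<in> S t"
  shows "\<kappa> * wnorm_sq_inv (\<Sigma> t) (ph t j) \<le> 2 * (ln (det (\<Sigma> (Suc t))) - ln (det (\<Sigma> t)))"
proof -
  obtain s0 where s0: "s0 \<in> S t" "ph t s0 = 0" using zero_feature by blast
  define u where "u = \<kappa> * wnorm_sq_inv (\<Sigma> t) (ph t j)"
  have u: "0 \<le> u" "u \<le> 1"
    using kappa_pos kappa_le_one wnorm_sq_inv_nonneg[OF Sigma_pos_def[OF assms(1)]]
      wnorm_sq_inv_Sigma_le_one[OF assms(1)]
    by (auto simp: u_def mult_le_one)
  have "det (\<Sigma> t) * (1 + u) \<le> det (\<Sigma> (Suc t))"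
    unfolding u_def Sigma_Suc[OF assms(1)]
    by (rule det_add_mnl_hess_ge[OF Sigma_pos_def[OF assms(1)] finite_S s0 assms(2)
          prob_mult_prob_ge[OF assms(1) s0(1) assms(2)]])
  then have "ln (det (\<Sigma> t) * (1 + u)) \<le> ln (det (\<Sigma> (Suc t)))"
    using det_Sigma_pos[OF assms(1)] det_Sigma_pos[of "Suc t"] u by (subst ln_le_cancel_iff) auto
  then have "ln (det (\<Sigma> t)) + ln (1 + u) \<le> ln (det (\<Sigma> (Suc t)))"
    using det_Sigma_pos[OF assms(1)] u by (simp add: ln_mult)
  then show ?thesis using ln_add_one_ge_half[OF u] by (simp add: u_def)
qed

lemma Max_wnorm_sq_inv_Sigma_le_ln_det_growth:
  assumes "1 \<le> t0" "t0 \<le> t" "det (\<Sigma> t) \<le> 2 * det (\<Sigma> t0)"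
  shows "Max ((\<lambda>s. wnorm_sq_inv (\<Sigma> t0) (ph t s)) ` S t)
           \<le> 4 / \<kappa> * (ln (det (\<Sigma> (Suc t))) - ln (det (\<Sigma> t)))"
proof (rule Max.boundedI)
  fix w
  assume "w \<in> (\<lambda>s. wnorm_sq_inv (\<Sigma> t0) (ph t s)) ` S t"
  then obtain j where j: "j \<in> S t" and w: "w = wnorm_sq_inv (\<Sigma> t0) (ph t j)" by blast
  have t: "1 \<le> t" using assms by simp
  have "w \<le> det (\<Sigma> t) / det (\<Sigma> t0) * wnorm_sq_inv (\<Sigma> t) (ph t j)"
    unfolding w using assms(1,2)
    by (intro rank_one_updates_wnorm_sq_inv_le_det_ratio Sigma_rank_one_updates Sigma_pos_def)
  also have "\<dots> \<le> 2 * wnorm_sq_inv (\<Sigma> t) (ph t j)"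
    using assms(3) det_Sigma_pos[OF assms(1)] wnorm_sq_inv_nonneg[OF Sigma_pos_def[OF t]]
    by (intro mult_right_mono) (auto simp: divide_le_eq)
  also have "\<dots> \<le> 4 / \<kappa> * (ln (det (\<Sigma> (Suc t))) - ln (det (\<Sigma> t)))"
    using wnorm_sq_inv_Sigma_le_ln_det_growth[OF t j] kappa_pos by (simp add: field_simps)
  finally show "w \<le> 4 / \<kappa> * (ln (det (\<Sigma> (Suc t))) - ln (det (\<Sigma> t)))" .
qed (use finite_S S_nonempty in auto)

lemma Max_wnorm_sq_inv_Sigma_nonneg: "1 \<le> t0 \<Longrightarrow> 0 \<le> Max ((\<lambda>s. wnorm_sq_inv (\<Sigma> t0) (ph t s)) ` S t)"
  using finite_S S_nonempty wnorm_sq_inv_nonneg[OF Sigma_pos_def]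
  by (simp add: Max_ge_iff) (meson all_not_in_conv)

lemma trace_Sigma_le:
  assumes "1 \<le> t"
  shows "trace (\<Sigma> t) \<le> real CARD('d) * lam + real (t - 1) * L\<^sup>2"
  using assms
proof (induction t rule: dec_induct)
  case base
  show ?case unfolding Sigma_1 by (simp add: trace_mat)
next
  case (step n)
  have "trace (mnl_hess (ph n) (S n) (\<theta> n)) \<le> L\<^sup>2"
    by (rule trace_mnl_hess_le[OF finite_S S_nonempty norm_ph_le])
  then show ?case
    using step by (simp add: Sigma_Suc trace_add of_nat_diff algebra_simps)
qed

lemma ln_det_Sigma_growth:
  "ln (det (\<Sigma> (Suc T))) - ln (det (\<Sigma> 1))
     \<le> real CARD('d) * ln (1 + real T * L\<^sup>2 / (lam * real CARD('d)))"
proof -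
  define d where "d = real CARD('d)"
  define X where "X = lam + real T * L\<^sup>2 / d"
  have d: "0 < d" by (simp add: d_def)
  have X: "0 < X" unfolding X_def using d lam_pos by (simp add: add_pos_nonneg)
  have psd: "pos_semidef (\<Sigma> (Suc T))" by (simp add: Sigma_pos_def pos_def_imp_pos_semidef)
  have "0 \<le> trace (\<Sigma> (Suc T))"
    unfolding trace_def by (rule sum_nonneg) (rule pos_semidef_diag_nonneg[OF psd])
  moreover have "trace (\<Sigma> (Suc T)) \<le> d * X"
    using trace_Sigma_le[of "Suc T"] d by (simp add: X_def d_def algebra_simps)
  ultimately have "(trace (\<Sigma> (Suc T)) / d) ^ CARD('d) \<le> X ^ CARD('d)"
    using d by (intro power_mono) (simp_all add: divide_le_eq mult.commute)
  then have "det (\<Sigma> (Suc T)) \<le> X ^ CARD('d)"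
    using det_le_trace_power[OF psd] by (simp add: d_def)
  then have "ln (det (\<Sigma> (Suc T))) \<le> d * ln X"
    using det_Sigma_pos[of "Suc T"] X by (simp add: d_def flip: ln_realpow)
  moreover have "ln (det (\<Sigma> 1)) = d * ln lam"
    using lam_pos unfolding Sigma_1 by (simp add: det_mat d_def ln_realpow)
  ultimately have "ln (det (\<Sigma> (Suc T))) - ln (det (\<Sigma> 1)) \<le> d * ln (X / lam)"
    using X lam_pos by (simp add: ln_div right_diff_distrib)
  also have "X / lam = 1 + real T * L\<^sup>2 / (lam * d)"
    using lam_pos d by (simp add: X_def field_simps)
  finally show ?thesis by (simp add: d_def)
qed

lemma sum_episode_bonuses_le:
  fixes tk :: "nat \<Rightarrow> nat" and \<beta> :: "nat \<Rightarrow> real"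
  assumes tk_first: "tk 1 = 1" and tk_last: "tk (K + 1) = T + 1"
    and tk_less: "\<And>k. 1 \<le> k \<Longrightarrow> k \<le> K \<Longrightarrow> tk k < tk (k + 1)"
    and det_within: "\<And>k t. 1 \<le> k \<Longrightarrow> k \<le> K \<Longrightarrow> tk k \<le> t \<Longrightarrow> t < tk (k + 1) \<Longrightarrow>
           det (\<Sigma> t) \<le> 2 * det (\<Sigma> (tk k))"
    and beta_nonneg: "\<And>t. 0 \<le> \<beta> t" and beta_mono: "mono \<beta>"
  shows "(\<Sum>k = 1..K. \<Sum>t = tk k..<tk (k + 1).
            3 * (\<beta> (tk k))\<^sup>2 * Max ((\<lambda>s. wnorm_sq_inv (\<Sigma> (tk k)) (ph t s)) ` S t))
         \<le> 12 * real CARD('d) / \<kappa> * (\<beta> T)\<^sup>2 * ln (1 + real T * L\<^sup>2 / (lam * real CARD('d)))"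
proof -
  define g where "g t = ln (det (\<Sigma> t))" for t
  define c where "c = 12 / \<kappa> * (\<beta> T)\<^sup>2"
  have c: "0 \<le> c" using kappa_pos by (simp add: c_def)
  have bonus: "3 * (\<beta> (tk k))\<^sup>2 * Max ((\<lambda>s. wnorm_sq_inv (\<Sigma> (tk k)) (ph t s)) ` S t)
      \<le> c * (g (Suc t) - g t)"
    if k: "1 \<le> k" "k \<le> K" and t: "tk k \<le> t" "t < tk (k + 1)" for k t
  proof -
    have "1 \<le> tk k" "tk k \<le> T"
      using episode_start_bounds[OF tk_first tk_last tk_less k] by auto
    then have "(\<beta> (tk k))\<^sup>2 \<le> (\<beta> T)\<^sup>2"
      using beta_mono beta_nonneg by (intro power_mono) (auto simp: mono_def)
    moreover have "0 \<le> Max ((\<lambda>s. wnorm_sq_inv (\<Sigma> (tk k)) (ph t s)) ` S t)"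
      by (rule Max_wnorm_sq_inv_Sigma_nonneg[OF \<open>1 \<le> tk k\<close>])
    ultimately have "3 * (\<beta> (tk k))\<^sup>2 * Max ((\<lambda>s. wnorm_sq_inv (\<Sigma> (tk k)) (ph t s)) ` S t)
        \<le> 3 * (\<beta> T)\<^sup>2 * Max ((\<lambda>s. wnorm_sq_inv (\<Sigma> (tk k)) (ph t s)) ` S t)"
      by (simp add: mult_right_mono)
    also have "\<dots> \<le> 3 * (\<beta> T)\<^sup>2 * (4 / \<kappa> * (g (Suc t) - g t))"
      using Max_wnorm_sq_inv_Sigma_le_ln_det_growth[OF \<open>1 \<le> tk k\<close> t(1) det_within[OF k t]]
      unfolding g_def by (intro mult_left_mono) auto
    also have "\<dots> = c * (g (Suc t) - g t)" by (simp add: c_def)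
    finally show ?thesis .
  qed
  have "(\<Sum>k = 1..K. \<Sum>t = tk k..<tk (k + 1).
            3 * (\<beta> (tk k))\<^sup>2 * Max ((\<lambda>s. wnorm_sq_inv (\<Sigma> (tk k)) (ph t s)) ` S t))
      \<le> (\<Sum>k = 1..K. \<Sum>t = tk k..<tk (k + 1). c * (g (Suc t) - g t))"
    using bonus by (intro sum_mono) auto
  also have "\<dots> = c * (g (Suc T) - g 1)"
    using sum_blocks_telescope[of K tk g] tk_less tk_first tk_last
    by (simp add: less_imp_le flip: sum_distrib_left)
  also have "\<dots> \<le> c * (real CARD('d) * ln (1 + real T * L\<^sup>2 / (lam * real CARD('d))))"
    using ln_det_Sigma_growth c by (intro mult_left_mono) (simp_all add: g_def)
  finally show ?thesis by (simp add: c_def mult_ac)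
qed

end

theorem lemma20:
  fixes \<phi> :: "'s::finite \<Rightarrow> 'a::finite \<Rightarrow> 's \<Rightarrow> real^'d"
    and Ssa :: "'s \<Rightarrow> 'a \<Rightarrow> 's set"
    and L\<phi> L\<theta> \<kappa> lam :: real
    and \<theta>star :: "real^'d"
    and st :: "nat \<Rightarrow> 's" and act :: "nat \<Rightarrow> 'a"
    and \<theta>hat :: "nat \<Rightarrow> real^'d"
    and \<Sigma> :: "nat \<Rightarrow> real^'d^'d"
    and \<beta> :: "nat \<Rightarrow> real"
    and T K :: nat and tk :: "nat \<Rightarrow> nat"
  assumes Ssa_fin: "\<And>s a. finite (Ssa s a)"
    and A1_phi: "\<And>s a s'. norm (\<phi> s a s') \<le> L\<phi>"
    and A1_theta: "norm \<theta>star \<le> L\<theta>"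
    and kappa: "0 < \<kappa>" "\<kappa> < 1"
    and A2: "\<And>t \<theta> s' s''. t \<ge> 1 \<Longrightarrow> \<theta> \<in> cball 0 L\<theta> \<Longrightarrow>
               s' \<in> Ssa (st t) (act t) \<Longrightarrow> s'' \<in> Ssa (st t) (act t) \<Longrightarrow>
               mnl_prob (\<phi> (st t) (act t)) (Ssa (st t) (act t)) \<theta> s' *
               mnl_prob (\<phi> (st t) (act t)) (Ssa (st t) (act t)) \<theta> s'' \<ge> \<kappa>"
    and A3: "\<And>s a. \<exists>s'\<in>Ssa s a. \<phi> s a s' = 0"
    and theta_hat_in: "\<And>t. t \<ge> 1 \<Longrightarrow> \<theta>hat (t + 1) \<in> cball 0 L\<theta>"
    and Sigma_1: "\<Sigma> 1 = mat lam"
    and Sigma_step: "\<And>t. t \<ge> 1 \<Longrightarrow>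
           \<Sigma> (t + 1) = \<Sigma> t + mnl_hess (\<phi> (st t) (act t)) (Ssa (st t) (act t)) (\<theta>hat (t + 1))"
    and ep_first: "tk 1 = 1"
    and ep_last: "tk (K + 1) = T + 1"
    and ep_mono: "\<And>k. 1 \<le> k \<Longrightarrow> k \<le> K \<Longrightarrow> tk k < tk (k + 1)"
    and ep_within: "\<And>k t. 1 \<le> k \<Longrightarrow> k \<le> K \<Longrightarrow> tk k \<le> t \<Longrightarrow> t < tk (k + 1) \<Longrightarrow>
           det (\<Sigma> t) \<le> 2 * det (\<Sigma> (tk k))"
    and ep_switch: "\<And>k. 1 \<le> k \<Longrightarrow> k < K \<Longrightarrow> det (\<Sigma> (tk (k + 1))) > 2 * det (\<Sigma> (tk k))"
    and beta_pos: "\<And>t. \<beta> t > 0"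
    and beta_mono: "mono \<beta>"
    and lam_ge: "lam \<ge> L\<phi>\<^sup>2"
  shows "(\<Sum>k = 1..K. \<Sum>t = tk k..<tk (k + 1). Bsq \<beta> \<Sigma> \<phi> Ssa (tk k) (st t) (act t))
         \<le> 12 * real CARD('d) / \<kappa> * (\<beta> T)\<^sup>2
            * ln (1 + real T * real (mnl_U Ssa) * L\<phi>\<^sup>2 / (lam * real CARD('d)))"
proof (cases "0 < lam")
  case False
  \<comment> \<open>Then \<open>L\<phi> = 0\<close>, all features vanish and both sides are \<open>0\<close>.\<close>
  then have "L\<phi>\<^sup>2 \<le> 0" using lam_ge by linarith
  then have "L\<phi> = 0" by simp
  then have "Bsq \<beta> \<Sigma> \<phi> Ssa n s a = 0" for n s a
    using A1_phi A3 by (intro Bsq_zero_features) (fastforce simp: norm_le_zero_iff)+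
  then show ?thesis using \<open>L\<phi> = 0\<close> by simp
next
  case True
  interpret mnl_gram_sequence "\<lambda>t. \<phi> (st t) (act t)" "\<lambda>t. Ssa (st t) (act t)" "\<lambda>t. \<theta>hat (Suc t)"
    \<Sigma> lam L\<phi> \<kappa>
    using Ssa_fin A3 A1_phi kappa A2[OF _ theta_hat_in] True lam_ge Sigma_1 Sigma_step
    by unfold_locales auto
  have "1 \<le> mnl_U Ssa" by (rule mnl_U_ge_one[OF Ssa_fin]) (use A3 in blast)
  then have U: "real T * L\<phi>\<^sup>2 * 1 \<le> real T * L\<phi>\<^sup>2 * real (mnl_U Ssa)" by (intro mult_left_mono) auto
  have "(\<Sum>k = 1..K. \<Sum>t = tk k..<tk (k + 1). Bsq \<beta> \<Sigma> \<phi> Ssa (tk k) (st t) (act t))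
      \<le> 12 * real CARD('d) / \<kappa> * (\<beta> T)\<^sup>2 * ln (1 + real T * L\<phi>\<^sup>2 / (lam * real CARD('d)))"
    unfolding Bsq_def
    by (rule sum_episode_bonuses_le[OF ep_first ep_last ep_mono ep_within _ beta_mono])
      (simp_all add: less_imp_le beta_pos)
  also have "\<dots> \<le> 12 * real CARD('d) / \<kappa> * (\<beta> T)\<^sup>2
      * ln (1 + real T * real (mnl_U Ssa) * L\<phi>\<^sup>2 / (lam * real CARD('d)))"
    using U True kappa
    by (intro mult_left_mono ln_mono add_left_mono divide_right_mono) (simp_all add: mult_ac
        add_pos_nonneg)
  finally show ?thesis .
qed

end
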